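(* In the setting below, for all $\mu_1,\mu_2,\mu_3\in\mathbb F_q^A$, $$\big(\mathsf{CCZ}^{(q)}\big)^{\otimes M}\,|\overline{\mu_1}\rangle|\overline{\mu_2}\rangle|\overline{\mu_3}\rangle=(-1)^{\mathrm{tr}\left(\sum_{b\in B}(\mu_1)_b(\mu_2)_b(\mu_3)_b\right)}|\overline{\mu_1}\rangle|\overline{\mu_2}\rangle|\overline{\mu_3}\rangle,$$ where $(\mathsf{CCZ}^{(q)})^{\otimes M}$ applies $\mathsf{CCZ}^{(q)}$ to the three qudits at position $\alpha$ of the three blocks, for every $\alpha\in M$.
   Context: Let $q=2^l$ ($l\ge2$) and $\mathbb F_q$ the field with $q$ elements. Fix integers $k,m,s$ with $q/3\ge k\ge m\ge s>0$ and $2k\le q-m$. Fix $A\subseteq\mathbb F_q$ with $|A|=k$, $B\subseteq A$ with $|B|=s$, and let $M=\mathbb F_q\setminus B$. $\mathbb F_q[x]_{<d}$ denotes polynomials of degree $<d$, $\phi_M(P)=(P(\alpha))_{\alpha\in M}$, and $C_2^\perp=\phi_M(\{P\in\mathbb F_q[x]_{<m}:P(b)=0\ \forall b\in B\})$. For $a\in A$, $\ell_a(x)=\prod_{a'\in A\setminus\{a\}}\frac{x-a'}{a-a'}$; for $\mu\in\mathbb F_q^A$, $p_\mu=\sum_a\mu_a\ell_a$ and $c_\mu=\phi_M(p_\mu)$. A qudit has Hilbert space $\mathbb C^q$ with orthonormal basis $\{|x\rangle:x\in\mathbb F_q\}$. The trace $\mathrm{tr}:\mathbb F_q\to\mathbb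 F_2$ is $\mathrm{tr}(x)=\sum_{i=0}^{l-1}x^{2^i}$, and $\mathsf{CCZ}^{(q)}|x\rangle|y\rangle|z\rangle=(-1)^{\mathrm{tr}(xyz)}|x\rangle|y\rangle|z\rangle$. The codestate of $\mu$ is $|\overline{\mu}\rangle=|C_2^\perp|^{-1/2}\sum_{\alpha\in C_2^\perp}|c_\mu+\alpha\rangle\in(\mathbb C^q)^{\otimes M}$. *)

theory Defs
  imports Complex_Main "HOL-Computational_Algebra.Polynomial"
begin

text \<open>Field trace F_q -> F_2 (values 0 or 1 inside F_q), for q = 2^l.\<close>
definition tr :: "nat \<Rightarrow> 'a::field \<Rightarrow> 'a" where
  "tr l x = (\<Sum>i<l. x ^ (2 ^ i))"

definition sgn_tr :: "nat \<Rightarrow> 'a::field \<Rightarrow> complex" where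
  "sgn_tr l x = (if tr l x = 0 then 1 else -1)"

definition lagrange_basis :: "'a::field set \<Rightarrow> 'a \<Rightarrow> 'a poly" where
  "lagrange_basis A a = (\<Prod>a'\<in>A - {a}. smult (inverse (a - a')) [:- a', 1:])"

definition p_mu :: "'a::field set \<Rightarrow> ('a \<Rightarrow> 'a) \<Rightarrow> 'a poly" where
  "p_mu A \<mu> = (\<Sum>a\<in>A. smult (\<mu> a) (lagrange_basis A a))"

text \<open>Evaluation map phi_M; words are functions M -> F_q, extended by 0 outside M.\<close>
definition phi :: "'a::field set \<Rightarrow> 'a poly \<Rightarrow> ('a \<Rightarrow> 'a)" where
  "phi M P = (\<lambda>x. if x \<in> M then poly P x else 0)"

definition c_mu :: "'a::field set \<Rightarrow> 'a set \<Rightarrow> ('a \<Rightarrow> 'a) \<Rightarrow> ('a \<Rightarrow> 'a)" where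
  "c_mu M A \<mu> = phi M (p_mu A \<mu>)"

definition C2perp :: "'a::field set \<Rightarrow> 'a set \<Rightarrow> nat \<Rightarrow> ('a \<Rightarrow> 'a) set" where
  "C2perp M B m = phi M ` {P. degree P < m \<and> (\<forall>b\<in>B. poly P b = 0)}"

text \<open>A state of (C^q)^{tensor M}: amplitude function on words (basis states).
  Codestate of mu: |C|^{-1/2} sum_{alpha in C} |c_mu + alpha>.\<close>
definition codestate :: "'a::field set \<Rightarrow> 'a set \<Rightarrow> 'a set \<Rightarrow> nat \<Rightarrow> ('a \<Rightarrow> 'a)
    \<Rightarrow> (('a \<Rightarrow> 'a) \<Rightarrow> complex)" where
  "codestate M A B m \<mu> = (\<lambda>w. if w \<in> (\<lambda>\<alpha> x. c_mu M A \<mu> x + \<alpha> x) ` C2perp M B m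
      then complex_of_real (1 / sqrt (real (card (C2perp M B m)))) else 0)"

definition tensor3 :: "('w \<Rightarrow> complex) \<Rightarrow> ('w \<Rightarrow> complex) \<Rightarrow> ('w \<Rightarrow> complex)
    \<Rightarrow> ('w \<times> 'w \<times> 'w \<Rightarrow> complex)" where
  "tensor3 \<psi>1 \<psi>2 \<psi>3 = (\<lambda>(x, y, z). \<psi>1 x * \<psi>2 y * \<psi>3 z)"

definition CCZ_tensor :: "nat \<Rightarrow> 'a::field set
    \<Rightarrow> (('a \<Rightarrow> 'a) \<times> ('a \<Rightarrow> 'a) \<times> ('a \<Rightarrow> 'a) \<Rightarrow> complex)
    \<Rightarrow> (('a \<Rightarrow> 'a) \<times> ('a \<Rightarrow> 'a) \<times> ('a \<Rightarrow> 'a) \<Rightarrow> complex)" where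
  "CCZ_tensor l M \<Psi> = (\<lambda>(x, y, z). (\<Prod>\<alpha>\<in>M. sgn_tr l (x \<alpha> * y \<alpha> * z \<alpha>)) * \<Psi> (x, y, z))"

end

theory Submission
  imports Defs
begin

text \<open>Every word in the support of a codestate is the evaluation on M of a polynomial of degree
  less than k that interpolates \<mu> on B, so the componentwise product of three such words is the
  evaluation of a polynomial R of degree at most 3(k-1) < q - 1. Power sums of exponent below
  q - 1 vanish over F_q, hence the sum of R over all of F_q is 0; in characteristic 2 the sum
  over M = F_q - B therefore equals the sum over B, which is the sum of the products of the
  \<mu>'s. Since the trace is additive and F_2-valued, the phase of CCZ on the support is constant
  and equals (-1)^tr of that sum.\<close>

lemma of_nat_card_UNIV_eq_0: "of_nat (card (UNIV :: 'a::{field,finite} set)) = (0 :: 'a)"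
proof -
  have "(\<Sum>x\<in>UNIV. x) = (\<Sum>x\<in>UNIV. x + (1 :: 'a))"
    by (rule sum.reindex_bij_witness[where i="\<lambda>x. x + 1" and j="\<lambda>x. x - 1"]) auto
  also have "\<dots> = (\<Sum>x\<in>UNIV. x) + of_nat (card (UNIV :: 'a set))"
    by (simp add: sum.distrib)
  finally show ?thesis
    by simp
qed

lemma two_eq_zero_if_card_UNIV_power_of_two:
  assumes "card (UNIV :: 'a::{field,finite} set) = 2 ^ l"
  shows "(2 :: 'a) = 0"
proof -
  have "2 \<le> card (UNIV :: 'a set)"
    using card_mono[of UNIV "{0, 1 :: 'a}"] by simp
  then have "l \<noteq> 0"
    using assms by (cases l) simp_all
  moreover have "(2 :: 'a) ^ l = 0"
    using of_nat_card_UNIV_eq_0[where 'a='a] assms by simp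
  ultimately show ?thesis
    by simp
qed

lemma power_card_UNIV_eq: "x ^ card (UNIV :: 'a set) = (x :: 'a::{field,finite})"
proof (cases "x = 0")
  case True
  then show ?thesis
    by (simp add: finite_UNIV_card_ge_0 zero_power)
next
  case False
  let ?U = "UNIV - {0 :: 'a}"
  have "(\<Prod>y\<in>?U. y) = (\<Prod>y\<in>?U. x * y)"
    by (rule prod.reindex_bij_witness[where i="\<lambda>y. x * y" and j="\<lambda>y. y / x"])
      (use False in auto)
  also have "\<dots> = x ^ card ?U * (\<Prod>y\<in>?U. y)"
    by (simp add: prod.distrib)
  finally have "x ^ card ?U = 1"
    by simp
  have "card (UNIV :: 'a set) = Suc (card ?U)"
    by (rule card_Suc_Diff1[symmetric]) simp_all
  then have "x ^ card (UNIV :: 'a set) = x * x ^ card ?U"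
    by (simp only: power_Suc)
  with \<open>x ^ card ?U = 1\<close> show ?thesis
    by (simp only: mult_1_right)
qed

lemma minus_eq_self_if_two_eq_zero:
  assumes "(2 :: 'a::ring_1) = 0"
  shows "- a = (a :: 'a)"
proof -
  have "a + a = 0"
    using assms by (metis mult_2 mult_zero_left)
  then show ?thesis
    by (simp add: add_eq_0_iff)
qed

lemma power_two_power_add:
  assumes "(2 :: 'a::comm_ring_1) = 0"
  shows "(a + b) ^ (2 ^ i) = a ^ (2 ^ i) + (b :: 'a) ^ (2 ^ i)"
proof (induction i)
  case 0
  then show ?case
    by simp
next
  case (Suc i)
  have square_add: "(c + d) ^ 2 = c ^ 2 + d ^ 2" for c d :: 'a
  proof -
    have "(c + d) ^ 2 = c ^ 2 + d ^ 2 + 2 * c * d"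
      by (simp add: power2_eq_square algebra_simps)
    then show ?thesis
      by (simp add: assms)
  qed
  have "(a + b) ^ (2 ^ Suc i) = ((a + b) ^ (2 ^ i)) ^ 2"
    by (simp add: power_mult[symmetric] mult.commute)
  also have "\<dots> = (a ^ (2 ^ i)) ^ 2 + (b ^ (2 ^ i)) ^ 2"
    by (simp add: Suc square_add)
  also have "\<dots> = a ^ (2 ^ Suc i) + b ^ (2 ^ Suc i)"
    by (simp add: power_mult[symmetric] mult.commute)
  finally show ?case .
qed

lemma power_two_power_sum:
  assumes "(2 :: 'a::comm_ring_1) = 0"
  shows "(\<Sum>i\<in>S. f i) ^ (2 ^ j) = (\<Sum>i\<in>S. (f i :: 'a) ^ (2 ^ j))"
  by (induction S rule: infinite_finite_induct)
    (simp_all add: power_two_power_add[OF assms] zero_power)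

lemma tr_add:
  assumes "(2 :: 'a::field) = 0"
  shows "tr l (a + b) = tr l a + tr l (b :: 'a)"
  by (simp add: tr_def power_two_power_add[OF assms] sum.distrib)

lemma tr_eq_0_or_1:
  assumes "card (UNIV :: 'a::{field,finite} set) = 2 ^ l"
  shows "tr l (x :: 'a) = 0 \<or> tr l x = 1"
proof -
  let ?t = "tr l x"
  have "?t ^ (2 ^ 1) = (\<Sum>i<l. (x ^ 2 ^ i) ^ (2 ^ 1))"
    unfolding tr_def by (rule power_two_power_sum[OF two_eq_zero_if_card_UNIV_power_of_two[OF assms]])
  then have "?t ^ 2 = (\<Sum>i<l. x ^ (2 ^ Suc i))"
    by (simp add: power_mult[symmetric] mult.commute)
  also have "\<dots> = ?t"
  proof -
    have "x + (\<Sum>i<l. x ^ (2 ^ Suc i)) = ?t + x ^ (2 ^ l)"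
      unfolding tr_def using sum.lessThan_Suc_shift[of "\<lambda>i. x ^ 2 ^ i" l]
      by (simp add: add.commute)
    then show ?thesis
      using power_card_UNIV_eq[of x] assms by simp
  qed
  finally have "?t * (?t - 1) = 0"
    by (simp add: power2_eq_square algebra_simps)
  then show ?thesis
    by auto
qed

lemma sgn_tr_add:
  assumes "card (UNIV :: 'a::{field,finite} set) = 2 ^ l"
  shows "sgn_tr l (a + b) = sgn_tr l a * sgn_tr l (b :: 'a)"
proof -
  note two = two_eq_zero_if_card_UNIV_power_of_two[OF assms]
  then have "(1 :: 'a) + 1 = 0"
    by simp
  then show ?thesis
    using tr_eq_0_or_1[OF assms, of a] tr_eq_0_or_1[OF assms, of b]
    by (auto simp: sgn_tr_def tr_add[OF two])
qed

lemma sgn_tr_sum: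
  assumes "card (UNIV :: 'a::{field,finite} set) = 2 ^ l"
  shows "sgn_tr l (\<Sum>x\<in>S. f x :: 'a) = (\<Prod>x\<in>S. sgn_tr l (f x))"
proof (induction S rule: infinite_finite_induct)
  case (insert x S)
  then show ?case
    by (simp add: sgn_tr_add[OF assms])
qed (simp_all add: sgn_tr_def tr_def zero_power)

lemma sum_power_UNIV_eq_0:
  assumes "j < card (UNIV :: 'a::{field,finite} set) - 1"
  shows "(\<Sum>x\<in>UNIV. x ^ j :: 'a) = 0"
proof (cases "j = 0")
  case True
  then show ?thesis
    using of_nat_card_UNIV_eq_0[where 'a='a] by simp
next
  case False
  let ?p = "monom (1 :: 'a) j + [:-1:]"
  have "degree ?p = j"
    using False by (subst degree_add_eq_left) (simp_all add: degree_monom_eq)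
  moreover from this have "?p \<noteq> 0"
    using False by auto
  ultimately have roots: "card {x. poly ?p x = 0} \<le> j"
    using card_poly_roots_bound by metis
  have "\<exists>c. c \<noteq> 0 \<and> c ^ j \<noteq> (1 :: 'a)"
  proof (rule ccontr)
    assume "\<not> ?thesis"
    then have "UNIV - {0} \<subseteq> {x. poly ?p x = 0}"
      by (auto simp: poly_monom)
    then have "card (UNIV - {0 :: 'a}) \<le> card {x. poly ?p x = 0}"
      by (intro card_mono) auto
    moreover have "card (UNIV - {0 :: 'a}) = card (UNIV :: 'a set) - 1"
      by (simp add: card_Diff_subset)
    ultimately show False
      using roots assms by linarith
  qed
  then obtain c :: 'a where c: "c \<noteq> 0" "c ^ j \<noteq> 1"
    by blast
  have "(\<Sum>x\<in>UNIV. x ^ j) = (\<Sum>x\<in>UNIV. (c * x) ^ j)"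
    by (rule sum.reindex_bij_witness[where i="\<lambda>y. c * y" and j="\<lambda>y. y / c"]) (use c in auto)
  also have "\<dots> = c ^ j * (\<Sum>x\<in>UNIV. x ^ j)"
    by (simp add: power_mult_distrib sum_distrib_left)
  finally have "(c ^ j - 1) * (\<Sum>x\<in>UNIV. x ^ j) = 0"
    by (simp add: algebra_simps)
  then show ?thesis
    using c by simp
qed

lemma sum_poly_UNIV_eq_0:
  assumes "degree R < card (UNIV :: 'a::{field,finite} set) - 1"
  shows "(\<Sum>x\<in>UNIV. poly R x :: 'a) = 0"
proof -
  have "(\<Sum>x\<in>UNIV. poly R x) = (\<Sum>i\<le>degree R. coeff R i * (\<Sum>x\<in>UNIV. x ^ i))"
    by (simp add: poly_altdef sum_distrib_left sum.swap[of _ UNIV])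
  also have "\<dots> = 0"
    using assms by (intro sum.neutral) (auto simp: sum_power_UNIV_eq_0)
  finally show ?thesis .
qed

lemma sum_poly_compl_eq_sum_poly:
  assumes "card (UNIV :: 'a::{field,finite} set) = 2 ^ l"
    and "degree R < card (UNIV :: 'a set) - 1"
  shows "(\<Sum>x\<in>- B. poly R x :: 'a) = (\<Sum>x\<in>B. poly R x)"
proof -
  have "(\<Sum>x\<in>- B. poly R x) + (\<Sum>x\<in>B. poly R x) = 0"
    using sum_poly_UNIV_eq_0[OF assms(2)] sum.union_disjoint[of "- B" B "poly R"]
    by (simp add: Un_commute)
  then show ?thesis
    using minus_eq_self_if_two_eq_zero[OF two_eq_zero_if_card_UNIV_power_of_two[OF assms(1)]]
    by (metis add_eq_0_iff)
qed

lemma poly_lagrange_basis: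
  assumes "finite A" "a \<in> A" "b \<in> A"
  shows "poly (lagrange_basis A a) b = (if a = b then 1 else (0 :: 'a::field))"
proof (cases "a = b")
  case True
  have "poly (smult (inverse (a - a')) [:- a', 1:]) a = inverse (a - a') * (a - a')" for a'
    by (simp add: algebra_simps)
  then have "poly (smult (inverse (a - a')) [:- a', 1:]) a = 1" if "a' \<noteq> a" for a'
    using that by simp
  then show ?thesis
    using True by (simp add: lagrange_basis_def poly_prod)
next
  case False
  then show ?thesis
    using assms by (simp add: lagrange_basis_def poly_prod prod_zero_iff) blast
qed

lemma poly_p_mu:
  assumes "finite A" "b \<in> A"
  shows "poly (p_mu A \<mu>) b = (\<mu> b :: 'a::field)"
proof -
  have "poly (p_mu A \<mu>) b = (\<Sum>a\<in>A. if a = b then \<mu> a else 0)"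
    unfolding p_mu_def poly_sum by (intro sum.cong) (simp_all add: poly_lagrange_basis assms)
  then show ?thesis
    using assms by simp
qed

lemma degree_p_mu:
  assumes "finite A"
  shows "degree (p_mu A \<mu>) \<le> card A - 1"
  unfolding p_mu_def
proof (rule degree_sum_le[OF assms])
  fix a
  assume a: "a \<in> A"
  have "degree (lagrange_basis A a)
      \<le> sum (degree \<circ> (\<lambda>a'. smult (inverse (a - a')) [:- a', 1:])) (A - {a})"
    unfolding lagrange_basis_def using assms by (intro degree_prod_sum_le) auto
  also have "\<dots> \<le> (\<Sum>a'\<in>A - {a}. 1)"
    by (intro sum_mono) (simp add: degree_smult_le)
  also have "\<dots> = card A - 1"
    using a assms by simp
  finally show "degree (smult (\<mu> a) (lagrange_basis A a)) \<le> card A - 1"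
    using degree_smult_le le_trans by blast
qed

lemma codestate_nonzero_imp_interpolant:
  assumes "finite A" "B \<subseteq> A" "m \<le> card A" "codestate M A B m \<mu> w \<noteq> 0"
  obtains P where "degree P \<le> card A - 1" "\<forall>b\<in>B. poly P b = \<mu> b" "\<forall>\<alpha>\<in>M. w \<alpha> = poly P \<alpha>"
proof -
  have "w \<in> (\<lambda>\<alpha> x. c_mu M A \<mu> x + \<alpha> x) ` C2perp M B m"
    using assms(4) unfolding codestate_def by (rule contrapos_np) simp
  then obtain Q where Q: "degree Q < m" "\<forall>b\<in>B. poly Q b = 0"
    and w: "w = (\<lambda>x. c_mu M A \<mu> x + phi M Q x)"
    unfolding C2perp_def by blast
  show ?thesis
  proof (rule that)
    have "degree Q \<le> card A - 1"
      using Q(1) assms(3) by linarith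
    then show "degree (p_mu A \<mu> + Q) \<le> card A - 1"
      using degree_p_mu[OF assms(1)] by (simp add: degree_add_le)
    show "\<forall>b\<in>B. poly (p_mu A \<mu> + Q) b = \<mu> b"
      using Q(2) assms(1,2) by (auto simp: poly_p_mu)
    show "\<forall>\<alpha>\<in>M. w \<alpha> = poly (p_mu A \<mu> + Q) \<alpha>"
      unfolding w c_mu_def phi_def by simp
  qed
qed

lemma CCZ_tensor_eq_scaleI:
  assumes "\<And>x y z. \<psi>1 x \<noteq> 0 \<Longrightarrow> \<psi>2 y \<noteq> 0 \<Longrightarrow> \<psi>3 z \<noteq> 0 \<Longrightarrow>
      (\<Prod>\<alpha>\<in>M. sgn_tr l (x \<alpha> * y \<alpha> * z \<alpha>)) = c"
  shows "CCZ_tensor l M (tensor3 \<psi>1 \<psi>2 \<psi>3) = (\<lambda>v. c * tensor3 \<psi>1 \<psi>2 \<psi>3 v)"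
proof
  fix v :: "('a \<Rightarrow> 'a) \<times> ('a \<Rightarrow> 'a) \<times> ('a \<Rightarrow> 'a)"
  obtain x y z where v: "v = (x, y, z)"
    by (cases v) auto
  have "CCZ_tensor l M (tensor3 \<psi>1 \<psi>2 \<psi>3) v
      = (\<Prod>\<alpha>\<in>M. sgn_tr l (x \<alpha> * y \<alpha> * z \<alpha>)) * (\<psi>1 x * \<psi>2 y * \<psi>3 z)"
    by (simp add: v CCZ_tensor_def tensor3_def)
  also have "\<dots> = c * (\<psi>1 x * \<psi>2 y * \<psi>3 z)"
    using assms[of x y z] by (cases "\<psi>1 x = 0 \<or> \<psi>2 y = 0 \<or> \<psi>3 z = 0") auto
  also have "\<dots> = c * tensor3 \<psi>1 \<psi>2 \<psi>3 v"
    by (simp add: v tensor3_def)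
  finally show "CCZ_tensor l M (tensor3 \<psi>1 \<psi>2 \<psi>3) v = c * tensor3 \<psi>1 \<psi>2 \<psi>3 v" .
qed

theorem proposition5p10:
  fixes l k m s :: nat and A B M :: "'a::{field,finite} set"
    and \<mu>1 \<mu>2 \<mu>3 :: "'a \<Rightarrow> 'a"
  assumes "card (UNIV :: 'a set) = 2 ^ l" and "l \<ge> 2"
    and "3 * k \<le> card (UNIV :: 'a set)" and "k \<ge> m" and "m \<ge> s" and "s > 0"
    and "2 * k \<le> card (UNIV :: 'a set) - m"
    and "card A = k" and "B \<subseteq> A" and "card B = s" and "M = UNIV - B"
  shows "CCZ_tensor l M (tensor3 (codestate M A B m \<mu>1) (codestate M A B m \<mu>2)
             (codestate M A B m \<mu>3))
       = (\<lambda>v. sgn_tr l (\<Sum>b\<in>B. \<mu>1 b * \<mu>2 b * \<mu>3 b)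
             * tensor3 (codestate M A B m \<mu>1) (codestate M A B m \<mu>2)
                 (codestate M A B m \<mu>3) v)"
proof (rule CCZ_tensor_eq_scaleI)
  fix x y z
  assume nonzero: "codestate M A B m \<mu>1 x \<noteq> 0" "codestate M A B m \<mu>2 y \<noteq> 0"
    "codestate M A B m \<mu>3 z \<noteq> 0"
  have "m \<le> card A"
    using assms(4,8) by simp
  note interpolant = codestate_nonzero_imp_interpolant[OF finite assms(9) this, unfolded assms(8)]
  obtain P1 where P1: "degree P1 \<le> k - 1" "\<forall>b\<in>B. poly P1 b = \<mu>1 b" "\<forall>\<alpha>\<in>M. x \<alpha> = poly P1 \<alpha>"
    by (rule interpolant[OF nonzero(1)])
  obtain P2 where P2: "degree P2 \<le> k - 1" "\<forall>b\<in>B. poly P2 b = \<mu>2 b" "\<forall>\<alpha>\<in>M. y \<alpha> = poly P2 \<alpha>"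
    by (rule interpolant[OF nonzero(2)])
  obtain P3 where P3: "degree P3 \<le> k - 1" "\<forall>b\<in>B. poly P3 b = \<mu>3 b" "\<forall>\<alpha>\<in>M. z \<alpha> = poly P3 \<alpha>"
    by (rule interpolant[OF nonzero(3)])
  let ?R = "P1 * P2 * P3"
  have "degree ?R \<le> 3 * (k - 1)"
    using P1(1) P2(1) P3(1) degree_mult_le[of P1 P2] degree_mult_le[of "P1 * P2" P3] by linarith
  then have deg_R: "degree ?R < card (UNIV :: 'a set) - 1"
    using assms(3-6) by linarith
  have "(\<Sum>\<alpha>\<in>M. x \<alpha> * y \<alpha> * z \<alpha>) = (\<Sum>\<alpha>\<in>M. poly ?R \<alpha>)"
    using P1(3) P2(3) P3(3) by (intro sum.cong) simp_all
  also have "\<dots> = (\<Sum>b\<in>B. poly ?R b)"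
    using sum_poly_compl_eq_sum_poly[OF assms(1) deg_R, of B] assms(11)
    by (simp add: Compl_eq_Diff_UNIV)
  also have "\<dots> = (\<Sum>b\<in>B. \<mu>1 b * \<mu>2 b * \<mu>3 b)"
    using P1(2) P2(2) P3(2) by (intro sum.cong) simp_all
  finally show "(\<Prod>\<alpha>\<in>M. sgn_tr l (x \<alpha> * y \<alpha> * z \<alpha>)) = sgn_tr l (\<Sum>b\<in>B. \<mu>1 b * \<mu>2 b * \<mu>3 b)"
    using sgn_tr_sum[OF assms(1), of "\<lambda>\<alpha>. x \<alpha> * y \<alpha> * z \<alpha>" M] by simp
qed

end
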